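(* Let $\mathcal{S}$ be a state space, $\mathcal{A}$ a finite action space, $\rho$ a distribution on $\mathcal{S}$, $\pi_{\mathrm{ref}}$ a policy with full support, $\beta>0$, $R>0$, and $r^*:\mathcal{S}\times\mathcal{A}\to[0,R]$. Let $$\Pi_{\le R/\beta}:=\Big\{\pi:\mathcal{S}\to\Delta(\mathcal{A})\ \Big|\ \max_{s,a}\Big|\log\frac{\pi(a|s)}{\pi_{\mathrm{ref}}(a|s)}\Big|\le\frac R\beta\Big\}.$$ Then for any policy $\pi\in\Pi_{\le R/\beta}$, $$\mathrm{Cov}^{\pi^*_{r^*}|\pi}\le1+\kappa\big(e^{2R/\beta}\big)\cdot\frac{J_\beta(\pi^*_{r^*})-J_\beta(\pi)}{\beta},$$ where $\kappa(x):=\frac{(x-1)^2}{x-1-\log x}$ (and $\kappa(x)=O(x)$).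
   Context: $\pi^*_{r^*}(a|s)\propto\pi_{\mathrm{ref}}(a|s)e^{r^*(s,a)/\beta}$; $J_\beta(\pi):=\mathbb{E}_{s\sim\rho}[\mathbb{E}_{a\sim\pi(\cdot|s)}r^*(s,a)-\beta\mathrm{KL}(\pi(\cdot|s)\|\pi_{\mathrm{ref}}(\cdot|s))]$; $\mathrm{Cov}^{\tilde\pi|\pi}:=\mathbb{E}_{s\sim\rho,a\sim\tilde\pi(\cdot|s)}[\tilde\pi(a|s)/\pi(a|s)]$. *)

theory Defs
  imports "HOL-Probability.Probability"
begin

text \<open>States: type 's with a probability measure rho; actions: a finite type 'a.
  A policy is a function pi :: 's => 'a => real, pi s a being pi(a|s).\<close>

definition is_policy :: "('s \<Rightarrow> 'a::finite \<Rightarrow> real) \<Rightarrow> bool" where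
  "is_policy p \<longleftrightarrow> (\<forall>s. (\<forall>a. p s a \<ge> 0) \<and> (\<Sum>a\<in>UNIV. p s a) = 1)"

definition pistar :: "real \<Rightarrow> ('s \<Rightarrow> 'a::finite \<Rightarrow> real) \<Rightarrow> ('s \<Rightarrow> 'a \<Rightarrow> real) \<Rightarrow> 's \<Rightarrow> 'a \<Rightarrow> real" where
  "pistar \<beta> piref r s a =
     piref s a * exp (r s a / \<beta>) / (\<Sum>b\<in>UNIV. piref s b * exp (r s b / \<beta>))"

definition KL :: "('s \<Rightarrow> 'a::finite \<Rightarrow> real) \<Rightarrow> ('s \<Rightarrow> 'a \<Rightarrow> real) \<Rightarrow> 's \<Rightarrow> real" where
  "KL p q s = (\<Sum>a\<in>UNIV. if p s a = 0 then 0 else p s a * ln (p s a / q s a))"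

definition J_beta :: "'s measure \<Rightarrow> ('s \<Rightarrow> 'a::finite \<Rightarrow> real) \<Rightarrow> real \<Rightarrow> ('s \<Rightarrow> 'a \<Rightarrow> real)
    \<Rightarrow> ('s \<Rightarrow> 'a \<Rightarrow> real) \<Rightarrow> real" where
  "J_beta \<rho> r \<beta> piref p =
     (\<integral>s. (\<Sum>a\<in>UNIV. p s a * r s a) - \<beta> * KL p piref s \<partial>\<rho>)"

definition Cov :: "'s measure \<Rightarrow> ('s \<Rightarrow> 'a::finite \<Rightarrow> real) \<Rightarrow> ('s \<Rightarrow> 'a \<Rightarrow> real) \<Rightarrow> real" where
  "Cov \<rho> pt p = (\<integral>s. (\<Sum>a\<in>UNIV. pt s a * (pt s a / p s a)) \<partial>\<rho>)"

definition kappa :: "real \<Rightarrow> real" where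
  "kappa x = (x - 1)^2 / (x - 1 - ln x)"

text \<open>The class Pi_{<= R/beta}: policies with |log (pi/pi_ref)| <= R/beta everywhere
  (the log being finite forces pi(a|s) > 0).\<close>
definition Pi_bounded :: "('s \<Rightarrow> 'a::finite \<Rightarrow> real) \<Rightarrow> real \<Rightarrow> ('s \<Rightarrow> 'a \<Rightarrow> real) set" where
  "Pi_bounded piref B = {p. is_policy p \<and> (\<forall>s a. p s a > 0 \<and> \<bar>ln (p s a / piref s a)\<bar> \<le> B)}"

end

theory Submission
  imports Defs
begin

text \<open>At a fixed state write S and P for the two action distributions and w = S / P for
  their likelihood ratio. The Gibbs variational principle turns the gap of the regularised
  objective into beta KL(P || S) = beta E_P[w - 1 - ln w], while the coverage integrand is
  1 + E_P[(w - 1)^2]. Both policies are within R / beta of pi_ref in log-ratio, so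
  w \<le> exp (2 R / beta), and on (0, x] one has (w - 1)^2 \<le> kappa x (w - 1 - ln w)
  with equality at w = x. Integrating over rho gives the claim.\<close>

lemma diff_ln_pos: "1 < x \<Longrightarrow> 0 < x - 1 - ln (x::real)"
  using ln_add_one_self_less_self[of "x - 1"] by simp

lemma two_mul_diff_ln_le_square:
  fixes x :: real
  assumes "1 \<le> x"
  shows "2 * (x - 1 - ln x) \<le> (x - 1)^2"
proof -
  let ?G = "\<lambda>t::real. (t - 1)^2 - 2 * (t - 1 - ln t)"
  have "?G 1 \<le> ?G x"
  proof (rule deriv_nonneg_imp_mono[where g = ?G and g' = "\<lambda>t. 2 * (t - 1)^2 / t"])
    fix t :: real assume "t \<in> {1..x}"
    then have "0 < t" by simp
    then show "(?G has_real_derivative 2 * (t - 1)^2 / t) (at t)"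
      by (auto intro!: derivative_eq_intros simp: field_simps power2_eq_square)
    show "0 \<le> 2 * (t - 1)^2 / t" using \<open>0 < t\<close> by simp
  qed (use assms in simp)
  then show ?thesis by simp
qed

lemma square_le_kappa_mul:
  fixes x w :: real
  assumes "1 < x" and "0 < w" and "w \<le> x"
  shows "(w - 1)^2 \<le> kappa x * (w - 1 - ln w)"
proof -
  define A B where "A = (x - 1)^2" and "B = x - 1 - ln x"
  have "0 < B" unfolding B_def using diff_ln_pos[OF \<open>1 < x\<close>] .
  have "2 * B \<le> A" unfolding A_def B_def using two_mul_diff_ln_le_square \<open>1 < x\<close> by simp
  define F where "F t = A * (t - 1 - ln t) - B * (t - 1)^2" for t
  \<comment> \<open>F vanishes at 1 and at x, and F' = (t - 1) (A / t - 2 B) with a decreasing second factor,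
    so F is nonincreasing on (0, 1] and unimodal on [1, x]\<close>
  have F_deriv: "(F has_real_derivative (t - 1) * (A / t - 2 * B)) (at t)" if "0 < t" for t
    unfolding F_def using that
    by (auto intro!: derivative_eq_intros simp: field_simps power2_eq_square)
  have "F 1 = 0" "F x = 0"
    unfolding F_def A_def B_def by (simp_all add: power2_eq_square algebra_simps)
  have "0 \<le> F w"
  proof (cases "w \<le> 1")
    case True
    have "F 1 \<le> F w"
    proof (rule deriv_nonpos_imp_antimono[OF F_deriv])
      fix t assume t: "t \<in> {w..1}"
      with \<open>0 < w\<close> have "A \<le> A / t" "0 < t" by (auto simp: le_divide_eq A_def mult_left_le)
      with t \<open>2 * B \<le> A\<close> show "(t - 1) * (A / t - 2 * B) \<le> 0"
        by (intro mult_nonpos_nonneg) auto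
    qed (use \<open>0 < w\<close> True in auto)
    with \<open>F 1 = 0\<close> show ?thesis by simp
  next
    case False
    have A_div_anti: "A / t' \<le> A / t" if "0 < t" "t \<le> t'" for t t'
      using that by (simp add: A_def divide_left_mono)
    consider "0 \<le> A / w - 2 * B" | "A / w - 2 * B \<le> 0" by linarith
    then show ?thesis
    proof cases
      case 1
      have "F 1 \<le> F w"
      proof (rule deriv_nonneg_imp_mono[OF F_deriv])
        fix t assume "t \<in> {1..w}"
        with 1 A_div_anti[of t w] show "0 \<le> (t - 1) * (A / t - 2 * B)" by simp
      qed (use False in auto)
      with \<open>F 1 = 0\<close> show ?thesis by simp
    next
      case 2
      have "F x \<le> F w"
      proof (rule deriv_nonpos_imp_antimono[OF F_deriv])
        fix t assume "t \<in> {w..x}"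
        with False 2 A_div_anti[of w t] show "(t - 1) * (A / t - 2 * B) \<le> 0"
          by (intro mult_nonneg_nonpos) auto
      qed (use False \<open>w \<le> x\<close> in auto)
      with \<open>F x = 0\<close> show ?thesis by simp
    qed
  qed
  then have "(w - 1)^2 \<le> A / B * (w - 1 - ln w)"
    using \<open>0 < B\<close> by (simp add: F_def field_simps)
  then show ?thesis by (simp add: kappa_def A_def B_def)
qed

definition partition_fn :: "real \<Rightarrow> ('s \<Rightarrow> 'a::finite \<Rightarrow> real) \<Rightarrow> ('s \<Rightarrow> 'a \<Rightarrow> real)
    \<Rightarrow> 's \<Rightarrow> real" where
  "partition_fn \<beta> q r s = (\<Sum>b\<in>UNIV. q s b * exp (r s b / \<beta>))"

definition J_state :: "('s \<Rightarrow> 'a::finite \<Rightarrow> real) \<Rightarrow> real \<Rightarrow> ('s \<Rightarrow> 'a \<Rightarrow> real)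
    \<Rightarrow> ('s \<Rightarrow> 'a \<Rightarrow> real) \<Rightarrow> 's \<Rightarrow> real" where
  "J_state r \<beta> q p s = (\<Sum>a\<in>UNIV. p s a * r s a) - \<beta> * KL p q s"

definition Cov_state :: "('s \<Rightarrow> 'a::finite \<Rightarrow> real) \<Rightarrow> ('s \<Rightarrow> 'a \<Rightarrow> real)
    \<Rightarrow> 's \<Rightarrow> real" where
  "Cov_state pt p s = (\<Sum>a\<in>UNIV. pt s a * (pt s a / p s a))"

lemma J_beta_eq_integral: "J_beta \<rho> r \<beta> q p = (\<integral>s. J_state r \<beta> q p s \<partial>\<rho>)"
  by (simp add: J_beta_def J_state_def)

lemma Cov_eq_integral: "Cov \<rho> pt p = (\<integral>s. Cov_state pt p s \<partial>\<rho>)"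
  by (simp add: Cov_def Cov_state_def)

lemma pistar_eq: "pistar \<beta> q r s a = q s a * exp (r s a / \<beta>) / partition_fn \<beta> q r s"
  by (simp add: pistar_def partition_fn_def)

lemma KL_eq_sum: "KL p q s = (\<Sum>a\<in>UNIV. p s a * ln (p s a / q s a))"
  unfolding KL_def by (intro sum.cong) auto

lemma abs_sum_weighted_le:
  fixes w f :: "'a \<Rightarrow> real"
  assumes "finite A" and "\<And>a. a \<in> A \<Longrightarrow> 0 \<le> w a" and "sum w A = 1"
    and "\<And>a. a \<in> A \<Longrightarrow> \<bar>f a\<bar> \<le> B"
  shows "\<bar>\<Sum>a\<in>A. w a * f a\<bar> \<le> B"
proof -
  have "\<bar>\<Sum>a\<in>A. w a * f a\<bar> \<le> (\<Sum>a\<in>A. w a * B)"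
    using assms(2,4) by (intro order_trans[OF sum_abs] sum_mono) (simp add: abs_mult mult_left_mono)
  also have "\<dots> = B"
    using assms(3) by (simp add: sum_distrib_right[symmetric])
  finally show ?thesis .
qed

lemma div_le_exp_of_abs_ln_div_le:
  fixes u v q B :: real
  assumes "0 < u" "0 < v" "0 < q" and "\<bar>ln (u / q)\<bar> \<le> B" "\<bar>ln (v / q)\<bar> \<le> B"
  shows "u / v \<le> exp (2 * B)"
proof -
  have "ln (u / v) = ln (u / q) - ln (v / q)"
    using assms(1-3) by (simp add: ln_div)
  also have "\<dots> \<le> 2 * B"
    using assms(4,5) by linarith
  finally show ?thesis
    using assms(1,2) by (metis divide_pos_pos exp_le_cancel_iff exp_ln)
qed

lemma Cov_state_le_kappa_KL:
  assumes "1 < x" and "\<And>a. 0 < p s a" "\<And>a. 0 < pt s a"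
    and "(\<Sum>a\<in>UNIV. p s a) = 1" "(\<Sum>a\<in>UNIV. pt s a) = 1"
    and "\<And>a. pt s a / p s a \<le> x"
  shows "Cov_state pt p s \<le> 1 + kappa x * KL p pt s"
proof -
  define w where "w a = pt s a / p s a" for a
  have w_pos: "0 < w a" for a
    using assms(2,3) by (simp add: w_def)
  have chi: "Cov_state pt p s - 1 = (\<Sum>a\<in>UNIV. p s a * (w a - 1)^2)"
  proof -
    have "p s a * (w a - 1)^2 = pt s a * w a - 2 * pt s a + p s a" for a
      using assms(2)[of a] by (simp add: w_def power2_eq_square field_simps)
    then show ?thesis
      using assms(4,5) by (simp add: Cov_state_def w_def sum.distrib sum_subtractf sum_distrib_left[symmetric])
  qed
  have KL: "KL p pt s = (\<Sum>a\<in>UNIV. p s a * (w a - 1 - ln (w a)))"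
  proof -
    have "p s a * ln (p s a / pt s a) = p s a * (w a - 1 - ln (w a)) - pt s a + p s a" for a
      using assms(2,3)[of a] by (simp add: w_def ln_div field_simps)
    then show ?thesis
      using assms(4,5) by (simp add: KL_eq_sum sum.distrib sum_subtractf)
  qed
  have "(\<Sum>a\<in>UNIV. p s a * (w a - 1)^2) \<le> (\<Sum>a\<in>UNIV. p s a * (kappa x * (w a - 1 - ln (w a))))"
    using square_le_kappa_mul[OF assms(1) w_pos] assms(2,6)
    by (intro sum_mono mult_left_mono) (auto simp: w_def less_imp_le)
  then show ?thesis
    unfolding KL using chi by (simp add: sum_distrib_left mult.left_commute)
qed

context
  fixes \<beta> :: real and q r :: "'s \<Rightarrow> 'a::finite \<Rightarrow> real" and s :: 's
  assumes q_pos: "\<And>a. 0 < q s a"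
begin

lemma partition_fn_pos: "0 < partition_fn \<beta> q r s"
  unfolding partition_fn_def using q_pos by (intro sum_pos) auto

lemma pistar_pos: "0 < pistar \<beta> q r s a"
  using q_pos partition_fn_pos by (simp add: pistar_eq)

lemma sum_pistar: "(\<Sum>a\<in>UNIV. pistar \<beta> q r s a) = 1"
  using partition_fn_pos
  by (simp add: pistar_eq sum_divide_distrib[symmetric] partition_fn_def)

lemma ln_pistar_div: "ln (pistar \<beta> q r s a / q s a) = r s a / \<beta> - ln (partition_fn \<beta> q r s)"
proof -
  have "pistar \<beta> q r s a / q s a = exp (r s a / \<beta>) / partition_fn \<beta> q r s"
    using q_pos[of a] by (simp add: pistar_eq)
  then show ?thesis
    using partition_fn_pos by (simp add: ln_div)
qed

lemma abs_ln_pistar_div_le: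
  assumes "(\<Sum>a\<in>UNIV. q s a) = 1" and "0 < \<beta>" and "\<And>a. 0 \<le> r s a \<and> r s a \<le> R"
  shows "\<bar>ln (pistar \<beta> q r s a / q s a)\<bar> \<le> R / \<beta>"
proof -
  have r_scaled: "0 \<le> r s b / \<beta>" "r s b / \<beta> \<le> R / \<beta>" for b
    using assms(2) assms(3)[of b] by (auto simp: divide_right_mono)
  have "(\<Sum>b\<in>UNIV. q s b * 1) \<le> partition_fn \<beta> q r s"
    unfolding partition_fn_def using q_pos r_scaled
    by (intro sum_mono mult_left_mono) (auto simp: less_imp_le)
  then have "1 \<le> partition_fn \<beta> q r s"
    using assms(1) by simp
  moreover have "partition_fn \<beta> q r s \<le> exp (R / \<beta>)"
  proof -
    have "partition_fn \<beta> q r s \<le> (\<Sum>b\<in>UNIV. q s b * exp (R / \<beta>))"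
      unfolding partition_fn_def using q_pos r_scaled
      by (intro sum_mono mult_left_mono) (auto simp: less_imp_le)
    then show ?thesis
      using assms(1) by (simp add: sum_distrib_right[symmetric])
  qed
  ultimately have "0 \<le> ln (partition_fn \<beta> q r s)" "ln (partition_fn \<beta> q r s) \<le> R / \<beta>"
    using ln_le_cancel_iff[of "partition_fn \<beta> q r s" "exp (R / \<beta>)"] by auto
  with r_scaled[of a] show ?thesis
    unfolding ln_pistar_div by linarith
qed

lemma J_state_pistar_diff:
  assumes "\<beta> \<noteq> 0" and "\<And>a. 0 \<le> p s a" and "(\<Sum>a\<in>UNIV. p s a) = 1"
  shows "J_state r \<beta> q (pistar \<beta> q r) s - J_state r \<beta> q p s = \<beta> * KL p (pistar \<beta> q r) s"
proof -
  let ?S = "pistar \<beta> q r" and ?Z = "partition_fn \<beta> q r s"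
  have "p s a * ln (p s a / q s a) = p s a * ln (p s a / ?S s a) + p s a * (r s a / \<beta> - ln ?Z)" for a
  proof (cases "p s a = 0")
    case False
    with assms(2)[of a] have "ln (p s a / q s a) = ln (p s a / ?S s a) + ln (?S s a / q s a)"
      using q_pos[of a] pistar_pos[of a] by (simp add: ln_div)
    then show ?thesis
      by (simp add: ln_pistar_div distrib_left)
  qed simp
  then have KL_p: "KL p q s = KL p ?S s + (\<Sum>a\<in>UNIV. p s a * r s a) / \<beta> - ln ?Z"
    using assms(3)
    by (simp add: KL_eq_sum sum.distrib right_diff_distrib sum_subtractf
        sum_divide_distrib[symmetric] sum_distrib_right[symmetric])
  have KL_S: "KL ?S q s = (\<Sum>a\<in>UNIV. ?S s a * r s a) / \<beta> - ln ?Z"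
    by (simp add: KL_eq_sum ln_pistar_div right_diff_distrib sum_subtractf sum_pistar
        sum_divide_distrib[symmetric] sum_distrib_right[symmetric])
  show ?thesis
    unfolding J_state_def KL_p KL_S using assms(1) by (simp add: algebra_simps)
qed

lemma pistar_div_le_exp:
  assumes "(\<Sum>a\<in>UNIV. q s a) = 1" and "0 < \<beta>" and "\<And>a. 0 \<le> r s a \<and> r s a \<le> R"
    and "0 < p s a" and "\<bar>ln (p s a / q s a)\<bar> \<le> R / \<beta>"
  shows "pistar \<beta> q r s a / p s a \<le> exp (2 * R / \<beta>)"
  using div_le_exp_of_abs_ln_div_le[OF pistar_pos assms(4) q_pos abs_ln_pistar_div_le[OF assms(1-3)] assms(5)]
  by simp

lemma Cov_state_pistar_le:
  assumes "0 < \<beta>" and "1 < x" and "\<And>a. 0 < p s a" and "(\<Sum>a\<in>UNIV. p s a) = 1"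
    and "\<And>a. pistar \<beta> q r s a / p s a \<le> x"
  shows "Cov_state (pistar \<beta> q r) p s
    \<le> 1 + kappa x * ((J_state r \<beta> q (pistar \<beta> q r) s - J_state r \<beta> q p s) / \<beta>)"
proof -
  have "Cov_state (pistar \<beta> q r) p s \<le> 1 + kappa x * KL p (pistar \<beta> q r) s"
    using assms(2,3) pistar_pos assms(4) sum_pistar assms(5) by (rule Cov_state_le_kappa_KL)
  moreover have "J_state r \<beta> q (pistar \<beta> q r) s - J_state r \<beta> q p s = \<beta> * KL p (pistar \<beta> q r) s"
    using assms(1,3,4) by (intro J_state_pistar_diff) (auto simp: less_imp_le)
  ultimately show ?thesis
    using assms(1) by simp
qed

end

lemma is_policy_pistar:
  assumes "\<And>s a. 0 < q s a"
  shows "is_policy (pistar \<beta> q r)"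
  unfolding is_policy_def using assms by (simp add: pistar_pos sum_pistar less_imp_le)

lemma borel_measurable_pistar:
  assumes [measurable]: "\<And>a. (\<lambda>s. q s a) \<in> borel_measurable M" "\<And>a. (\<lambda>s. r s a) \<in> borel_measurable M"
  shows "(\<lambda>s. pistar \<beta> q r s a) \<in> borel_measurable M"
  unfolding pistar_def by measurable

lemma integrable_J_state:
  assumes "finite_measure M"
    and [measurable]: "\<And>a. (\<lambda>s. r s a) \<in> borel_measurable M" "\<And>a. (\<lambda>s. q s a) \<in> borel_measurable M"
      "\<And>a. (\<lambda>s. p s a) \<in> borel_measurable M"
    and "is_policy p" and "\<And>s a. \<bar>r s a\<bar> \<le> R" and "\<And>s a. \<bar>ln (p s a / q s a)\<bar> \<le> B"
  shows "integrable M (J_state r \<beta> q p)"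
proof (rule finite_measure.integrable_const_bound[OF assms(1), where B = "R + \<bar>\<beta>\<bar> * B"])
  show "AE s in M. norm (J_state r \<beta> q p s) \<le> R + \<bar>\<beta>\<bar> * B"
  proof (rule AE_I2)
    fix s
    have p: "\<And>a. 0 \<le> p s a" "(\<Sum>a\<in>UNIV. p s a) = 1"
      using \<open>is_policy p\<close> by (auto simp: is_policy_def)
    have "\<bar>\<Sum>a\<in>UNIV. p s a * r s a\<bar> \<le> R"
      using p assms(6) by (intro abs_sum_weighted_le) auto
    moreover have "\<bar>\<beta> * KL p q s\<bar> \<le> \<bar>\<beta>\<bar> * B"
    proof -
      have "\<bar>KL p q s\<bar> \<le> B"
        unfolding KL_eq_sum using p assms(7) by (intro abs_sum_weighted_le) auto
      then show ?thesis by (simp add: abs_mult mult_left_mono)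
    qed
    ultimately show "norm (J_state r \<beta> q p s) \<le> R + \<bar>\<beta>\<bar> * B"
      unfolding J_state_def real_norm_def by linarith
  qed
qed (unfold J_state_def KL_def, measurable)

lemma integrable_Cov_state:
  assumes "finite_measure M"
    and [measurable]: "\<And>a. (\<lambda>s. pt s a) \<in> borel_measurable M" "\<And>a. (\<lambda>s. p s a) \<in> borel_measurable M"
    and "is_policy pt" and "\<And>s a. 0 < p s a" and "\<And>s a. pt s a / p s a \<le> x"
  shows "integrable M (Cov_state pt p)"
proof (rule finite_measure.integrable_const_bound[OF assms(1), where B = x])
  show "AE s in M. norm (Cov_state pt p s) \<le> x"
  proof (rule AE_I2)
    fix s
    have pt: "\<And>a. 0 \<le> pt s a" "(\<Sum>a\<in>UNIV. pt s a) = 1"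
      using \<open>is_policy pt\<close> by (auto simp: is_policy_def)
    have "\<bar>pt s a / p s a\<bar> \<le> x" for a
      using pt(1)[of a] assms(5,6)[of s a] by simp
    then show "norm (Cov_state pt p s) \<le> x"
      unfolding Cov_state_def real_norm_def using pt by (intro abs_sum_weighted_le) auto
  qed
qed (unfold Cov_state_def, measurable)

lemma Cov_le_of_pointwise:
  assumes "prob_space M" and "integrable M (Cov_state pt p)"
    and "integrable M (J_state r \<beta> q pt)" and "integrable M (J_state r \<beta> q p)"
    and "\<And>s. Cov_state pt p s \<le> 1 + k * ((J_state r \<beta> q pt s - J_state r \<beta> q p s) / \<beta>)"
  shows "Cov M pt p \<le> 1 + k * ((J_beta M r \<beta> q pt - J_beta M r \<beta> q p) / \<beta>)"
proof -
  interpret prob_space M by fact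
  have "Cov M pt p \<le> (\<integral>s. 1 + k * ((J_state r \<beta> q pt s - J_state r \<beta> q p s) / \<beta>) \<partial>M)"
    unfolding Cov_eq_integral using assms(2-5) by (intro integral_mono) auto
  also have "\<dots> = 1 + k * ((J_beta M r \<beta> q pt - J_beta M r \<beta> q p) / \<beta>)"
    using assms(3,4) by (simp add: J_beta_eq_integral prob_space)
  finally show ?thesis .
qed

theorem lemmaE4:
  fixes \<rho> :: "'s measure" and piref p r :: "'s \<Rightarrow> 'a::finite \<Rightarrow> real"
    and \<beta> R :: real
  assumes "prob_space \<rho>"
    and "is_policy piref" and "\<forall>s a. piref s a > 0"
    and "\<beta> > 0" and "R > 0"
    and "\<forall>s a. 0 \<le> r s a \<and> r s a \<le> R"
    and "\<forall>a. (\<lambda>s. r s a) \<in> borel_measurable \<rho>"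
    and "\<forall>a. (\<lambda>s. piref s a) \<in> borel_measurable \<rho>"
    and "\<forall>a. (\<lambda>s. p s a) \<in> borel_measurable \<rho>"
    and "p \<in> Pi_bounded piref (R / \<beta>)"
  shows "Cov \<rho> (pistar \<beta> piref r) p
           \<le> 1 + kappa (exp (2 * R / \<beta>)) *
                 ((J_beta \<rho> r \<beta> piref (pistar \<beta> piref r) - J_beta \<rho> r \<beta> piref p) / \<beta>)"
proof -
  interpret prob_space \<rho> by fact
  note [measurable] = assms(7-9)[rule_format]
  have q_pos: "\<And>s a. 0 < piref s a" and q_sum: "\<And>s. (\<Sum>a\<in>UNIV. piref s a) = 1"
    using assms(2,3) by (auto simp: is_policy_def)
  have r_bounds: "\<And>s a. 0 \<le> r s a \<and> r s a \<le> R" and r_abs: "\<And>s a. \<bar>r s a\<bar> \<le> R"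
    using assms(6) by auto
  have p: "is_policy p" "\<And>s a. 0 < p s a" "\<And>s a. \<bar>ln (p s a / piref s a)\<bar> \<le> R / \<beta>"
    and p_sum: "\<And>s. (\<Sum>a\<in>UNIV. p s a) = 1"
    using assms(10) by (auto simp: Pi_bounded_def is_policy_def)
  define S where "S = pistar \<beta> piref r"
  have S_policy: "is_policy S"
    unfolding S_def using q_pos by (rule is_policy_pistar)
  have S_ln: "\<bar>ln (S s a / piref s a)\<bar> \<le> R / \<beta>" for s a
    unfolding S_def by (rule abs_ln_pistar_div_le) (use q_pos q_sum assms(4) r_bounds in auto)
  have ratio: "S s a / p s a \<le> exp (2 * R / \<beta>)" for s a
    unfolding S_def by (rule pistar_div_le_exp) (use q_pos q_sum assms(4) r_bounds p in auto)
  have [measurable]: "(\<lambda>s. S s a) \<in> borel_measurable \<rho>" for a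
    unfolding S_def by (rule borel_measurable_pistar) measurable
  show ?thesis
    unfolding S_def[symmetric]
  proof (rule Cov_le_of_pointwise[OF assms(1)])
    show "integrable \<rho> (Cov_state S p)"
      by (rule integrable_Cov_state[OF finite_measure_axioms _ _ S_policy p(2) ratio]) measurable
    show "integrable \<rho> (J_state r \<beta> piref S)"
      by (rule integrable_J_state[OF finite_measure_axioms _ _ _ S_policy r_abs S_ln]; measurable)
    show "integrable \<rho> (J_state r \<beta> piref p)"
      by (rule integrable_J_state[OF finite_measure_axioms _ _ _ p(1) r_abs p(3)]; measurable)
    show "Cov_state S p s
      \<le> 1 + kappa (exp (2 * R / \<beta>)) * ((J_state r \<beta> piref S s - J_state r \<beta> piref p s) / \<beta>)" for s
      unfolding S_def using q_pos
      by (rule Cov_state_pistar_le) (use assms(4,5) p(2) p_sum ratio in \<open>auto simp: S_def\<close>)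
  qed
qed

end
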